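(* Let $(u,v)\in k(x)^n\times k(x)^m$. There exist circuits $c_u\in\mathsf{ACirc}[0,n]$ and $c_v\in\mathsf{ACirc}[m,0]$ such that $[\![c_u]\!]=\{(\bullet,u)\}$ and $[\![c_v]\!]=\{(v,\bullet)\}$.
   Context: Fix a field $k$; $k(x)$ is the field of fractions of polynomials in $x$ over $k$. Circuits: terms built from generators with sorts $(n,m)$: copier $\Delta:(1,2)$, discard $!:(1,0)$, amplifier $\mathsf{s}_r:(1,1)$ ($r\in k$), register $\mathsf{x}:(1,1)$, adder $+:(2,1)$, zero $0:(0,1)$, one $\mathbf{1}:(0,1)$; mirror images $\Delta^{op}:(2,1)$, $!^{op}:(0,1)$, $\mathsf{s}_r^{op}$, $\mathsf{x}^{op}:(1,1)$, $+^{op}:(1,2)$, $0^{op}:(1,0)$, $\mathbf{1}^{op}:(1,0)$; $\mathrm{id}_0:(0,0),\mathrm{id}_1:(1,1),\mathrm{sw}:(2,2)$; closed under sequential composition $;$ and parallel composition $\oplus$. $\mathsf{ACirc}[n,m]$ is the set of circuits of sort $(n,m)$. Denotation: $[\![\Delta]\!]=\{(p,(p,p))\}$, $[\![!]\!]=\{(p,\bullet)\}$, $[\![+]\!]=\{((p,q),p+q)\}$, $[\![0]\!]=\{(\bullet,0)\}$, $[\![\mathbf 1]\!]=\{(\bullet,1)\}$, $[\![\mathsf s_r]\!]=\{(p,rp)\}$, $[\![\mathsf x]\!]=\{(p,px)\}$ ($\bullet$ the unique element of $k(x)^0$); mirrored generators denote converse relations; $\mathrm{id}_1,\mathrm{sw},\mathrm{id}_0$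 denote identity, swap, $\{(\bullet,\bullet)\}$; $;$ is relational composition and $\oplus$ product of relations. *)

theory Defs
  imports "HOL-Computational_Algebra.Polynomial" "HOL-Computational_Algebra.Fraction_Field"
begin

type_synonym 'k ratfun = "'k poly fract"

definition const_rf :: "'k::field \<Rightarrow> 'k ratfun" where
  "const_rf r = Fract [:r:] 1"

definition var_rf :: "'k::field ratfun" where
  "var_rf = Fract [:0, 1:] 1"

datatype 'k circ =
    Copy | Discard | Amp 'k | Reg | Add | Zero | One
  | CopyOp | DiscardOp | AmpOp 'k | RegOp | AddOp | ZeroOp | OneOp
  | Id0 | Id1 | Sw
  | Seq "'k circ" "'k circ"
  | Par "'k circ" "'k circ"

inductive has_sort :: "'k circ \<Rightarrow> nat \<Rightarrow> nat \<Rightarrow> bool" where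
  "has_sort Copy 1 2"
| "has_sort Discard 1 0"
| "has_sort (Amp r) 1 1"
| "has_sort Reg 1 1"
| "has_sort Add 2 1"
| "has_sort Zero 0 1"
| "has_sort One 0 1"
| "has_sort CopyOp 2 1"
| "has_sort DiscardOp 0 1"
| "has_sort (AmpOp r) 1 1"
| "has_sort RegOp 1 1"
| "has_sort AddOp 1 2"
| "has_sort ZeroOp 1 0"
| "has_sort OneOp 1 0"
| "has_sort Id0 0 0"
| "has_sort Id1 1 1"
| "has_sort Sw 2 2"
| "has_sort c n l \<Longrightarrow> has_sort d l m \<Longrightarrow> has_sort (Seq c d) n m"
| "has_sort c n m \<Longrightarrow> has_sort d n' m' \<Longrightarrow> has_sort (Par c d) (n + n') (m + m')"

definition ACirc :: "nat \<Rightarrow> nat \<Rightarrow> 'k circ set" where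
  "ACirc n m = {c. has_sort c n m}"

text \<open>Denotation: relations between k(x)^n and k(x)^m, vectors as lists
  (the empty list is the unique element of k(x)^0); mirrored generators denote the converse relations, written out explicitly.\<close>
fun den :: "'k::field circ \<Rightarrow> ('k ratfun list \<times> 'k ratfun list) set" where
  "den Copy = {([p], [p, p]) | p. True}"
| "den Discard = {([p], []) | p. True}"
| "den (Amp r) = {([p], [const_rf r * p]) | p. True}"
| "den Reg = {([p], [p * var_rf]) | p. True}"
| "den Add = {([p, q], [p + q]) | p q. True}"
| "den Zero = {([], [0])}"
| "den One = {([], [1])}"
| "den CopyOp = {([p, p], [p]) | p. True}"
| "den DiscardOp = {([], [p]) | p. True}"
| "den (AmpOp r) = {([const_rf r * p], [p]) | p. True}"
| "den RegOp = {([p * var_rf], [p]) | p. True}"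
| "den AddOp = {([p + q], [p, q]) | p q. True}"
| "den ZeroOp = {([0], [])}"
| "den OneOp = {([1], [])}"
| "den Id0 = {([], [])}"
| "den Id1 = {([p], [p]) | p. True}"
| "den Sw = {([p, q], [q, p]) | p q. True}"
| "den (Seq c d) = den c O den d"
| "den (Par c d) = {(xs @ xs', ys @ ys') | xs ys xs' ys'. (xs, ys) \<in> den c \<and> (xs', ys') \<in> den d}"

end

theory Submission
  imports Defs
begin

text \<open>A state \<open>a / b\<close> of \<open>k(x)\<close> is produced by feeding \<open>1\<close> into a circuit multiplying
  by the polynomial \<open>a\<close> (built by Horner's rule from amplifiers, registers, copiers and
  adders) and then through the mirror image of the circuit multiplying by \<open>b\<close>: the converse
  of \<open>q \<mapsto> b q\<close> relates \<open>a\<close> exactly to \<open>a / b\<close>. Vectors of states are parallel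
  compositions, and costates are mirror images of states.\<close>

fun mirror :: "'k circ \<Rightarrow> 'k circ" where
  "mirror Copy = CopyOp" | "mirror Discard = DiscardOp" | "mirror (Amp r) = AmpOp r"
| "mirror Reg = RegOp" | "mirror Add = AddOp" | "mirror Zero = ZeroOp" | "mirror One = OneOp"
| "mirror CopyOp = Copy" | "mirror DiscardOp = Discard" | "mirror (AmpOp r) = Amp r"
| "mirror RegOp = Reg" | "mirror AddOp = Add" | "mirror ZeroOp = Zero" | "mirror OneOp = One"
| "mirror Id0 = Id0" | "mirror Id1 = Id1" | "mirror Sw = Sw"
| "mirror (Seq c d) = Seq (mirror d) (mirror c)"
| "mirror (Par c d) = Par (mirror c) (mirror d)"

lemma has_sort_mirror: "has_sort c n m \<Longrightarrow> has_sort (mirror c) m n"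
  by (induction rule: has_sort.induct) (auto intro: has_sort.intros[unfolded One_nat_def])

lemma den_mirror: "den (mirror c) = (den c)\<inverse>"
  by (induction c) (auto simp: converse_relcomp)

text \<open>Horner's rule: \<open>(c + x p) q = c q + x (p q)\<close>.\<close>
fun mult_circ :: "'k list \<Rightarrow> 'k circ" where
  "mult_circ [] = Seq Discard Zero"
| "mult_circ (c # cs) = Seq Copy (Seq (Par (Amp c) (Seq (mult_circ cs) Reg)) Add)"

lemma has_sort_mult_circ: "has_sort (mult_circ cs) 1 1"
proof (induction cs)
  case Nil
  show ?case using has_sort.intros(18)[OF has_sort.intros(2,6)] by simp
next
  case (Cons c cs)
  have "has_sort (Par (Amp c) (Seq (mult_circ cs) Reg)) (1 + 1) (1 + 1)"
    using has_sort.intros(19)[OF has_sort.intros(3) has_sort.intros(18)[OF Cons has_sort.intros(4)]] .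
  then have "has_sort (Seq (Par (Amp c) (Seq (mult_circ cs) Reg)) Add) 2 1"
    unfolding one_add_one by (rule has_sort.intros(18)[OF _ has_sort.intros(5)])
  then show ?case using has_sort.intros(18)[OF has_sort.intros(1)] by simp
qed

lemma Fract_pCons: "Fract (pCons c p) 1 = const_rf c + Fract p 1 * var_rf"
proof -
  have "pCons c p = [:c:] + p * [:0, 1:]" by simp
  then show ?thesis by (simp add: const_rf_def var_rf_def)
qed

definition unary_rel :: "('a \<Rightarrow> 'a) \<Rightarrow> ('a list \<times> 'a list) set" where
  "unary_rel f = {([q], [f q]) | q. True}"

lemma den_Seq_unary_rel:
  "den c = unary_rel f \<Longrightarrow> den d = unary_rel g \<Longrightarrow> den (Seq c d) = unary_rel (g \<circ> f)"
  by (auto simp: unary_rel_def relcomp_unfold)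

lemma den_Par_unary_rel:
  assumes "den c = unary_rel f" and "den d = unary_rel g"
  shows "den (Par c d) = {([q, q'], [f q, g q']) | q q'. True}"
proof -
  have "([q] @ [q'], [f q] @ [g q']) \<in> den (Par c d)" for q q'
    using assms unfolding unary_rel_def den.simps by blast
  then show ?thesis using assms by (auto simp: unary_rel_def)
qed

lemma den_sum_circ:
  assumes "den c = unary_rel f" and "den d = unary_rel g"
  shows "den (Seq Copy (Seq (Par c d) Add)) = unary_rel (\<lambda>q. f q + g q)"
  using den_Par_unary_rel[OF assms] by (auto simp: unary_rel_def relcomp_unfold)

lemma den_mult_circ: "den (mult_circ cs) = unary_rel (\<lambda>q. Fract (Poly cs) 1 * q)"
proof (induction cs)
  case Nil
  then show ?case by (auto simp: unary_rel_def relcomp_unfold fract_collapse)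
next
  case (Cons c cs)
  have amp: "den (Amp c) = unary_rel (\<lambda>q. const_rf c * q)"
    and reg: "den Reg = unary_rel (\<lambda>q. q * var_rf)"
    by (auto simp: unary_rel_def)
  have "den (mult_circ (c # cs)) = unary_rel (\<lambda>q. const_rf c * q + Fract (Poly cs) 1 * q * var_rf)"
    unfolding mult_circ.simps using den_sum_circ[OF amp den_Seq_unary_rel[OF Cons reg]]
    by (simp add: comp_def)
  then show ?case by (simp add: Fract_pCons algebra_simps)
qed

lemma Fract_mult_eq_iff:
  fixes a b :: "'a::idom"
  assumes "b \<noteq> 0"
  shows "Fract b 1 * q = Fract a 1 \<longleftrightarrow> q = Fract a b"
proof -
  have "Fract b 1 \<noteq> 0" using assms by (simp add: Zero_fract_def eq_fract)
  moreover have "Fract a b = Fract a 1 / Fract b 1" using assms by simp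
  ultimately show ?thesis by (metis eq_divide_eq mult.commute)
qed

lemma ratfun_state_ex: "\<exists>c. has_sort c 0 1 \<and> den c = {([], [f :: 'k::field ratfun])}"
proof -
  obtain a b where f: "f = Fract a b" and "b \<noteq> 0" by (cases f) auto
  define c where "c = Seq One (Seq (mult_circ (coeffs a)) (mirror (mult_circ (coeffs b))))"
  have "has_sort c 0 1"
    unfolding c_def using has_sort.intros(18)[OF has_sort.intros(7)
      has_sort.intros(18)[OF has_sort_mult_circ has_sort_mirror[OF has_sort_mult_circ]]] .
  moreover have "den c = {([], [q]) | q. Fract b 1 * q = Fract a 1}"
    by (auto simp: c_def den_mirror den_mult_circ unary_rel_def relcomp_unfold)
  then have "den c = {([], [f])}"
    using Fract_mult_eq_iff[OF \<open>b \<noteq> 0\<close>] f by auto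
  ultimately show ?thesis by blast
qed

lemma states_ex: "\<exists>c. has_sort c 0 (length u) \<and> den c = {([], u :: 'k::field ratfun list)}"
proof (induction u)
  case Nil
  show ?case using has_sort.intros(15) by force
next
  case (Cons f u)
  then obtain d where d: "has_sort d 0 (length u)" "den d = {([], u)}" by blast
  obtain c where c: "has_sort c 0 1" "den c = {([], [f])}" using ratfun_state_ex by blast
  have "has_sort (Par c d) 0 (length (f # u))" using has_sort.intros(19)[OF c(1) d(1)] by simp
  moreover have "den (Par c d) = {([], f # u)}" using c d by auto
  ultimately show ?case by blast
qed

theorem proposition2:
  fixes u v :: "'k::field ratfun list"
  assumes "length u = n" and "length v = m"
  shows "\<exists>cu \<in> ACirc 0 n. \<exists>cv \<in> ACirc m 0. den cu = {([], u)} \<and> den cv = {(v, [])}"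
proof -
  obtain cu where "has_sort cu 0 n" "den cu = {([], u)}" using states_ex assms(1) by blast
  moreover obtain cv where "has_sort cv 0 m" "den cv = {([], v)}" using states_ex assms(2) by blast
  then have "has_sort (mirror cv) m 0" "den (mirror cv) = {(v, [])}"
    by (auto simp: has_sort_mirror den_mirror)
  ultimately show ?thesis unfolding ACirc_def by blast
qed

end
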